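(* Let $k$ be an even integer, let $f=\sum_{n\ge 1}a(n)q^n\in S_k$ be a normalized Hecke eigenform of level $1$, and let $\nu$ be a nonnegative integer. Then $$\frac{(k+2\nu-1)!}{(k+\nu-1)!}\,\mathcal{S}_1\big([\theta(\tau),f(4\tau)]_{\nu}\big)=[f(\tau),f(\tau)]_{2\nu},$$ where the first bracket is taken with $\theta$ of weight $\tfrac12$ and $f(4\tau)$ of weight $k$, and the second with both entries of weight $k$.
   Context: $q=e^{2\pi i\tau}$, $\tau\in\mathbb H$, and $S_k$ denotes the space of cusp forms of weight $k$ for $\mathrm{SL}_2(\mathbb Z)$. $\theta(\tau)=\sum_{n\in\mathbb Z}q^{n^2}$ is Jacobi's theta function. For holomorphic functions $f_1,f_2$ on $\mathbb H$ regarded as having weights $k_1,k_2$, and $\nu\in\mathbb Z_{\ge0}$, the Rankin–Cohen bracket is $$[f_1,f_2]_\nu=(2\pi i)^{-\nu}\sum_{i=0}^{\nu}(-1)^{\nu-i}\binom{\nu}{i}\frac{\Gamma(k_1+\nu)\Gamma(k_2+\nu)}{\Gamma(k_1+i)\Gamma(k_2+\nu-i)}f_1^{(i)}f_2^{(\nu-i)},$$ where $f^{(i)}$ denotes the $i$-th derivative with respect to $\tau$. For an integer $\lambda$, the first Shimura map $\mathcal S_1$ on forms of weight $\lambda+\tfrac12$ is given on $q$-expansions by $\sum_{n\ge1}c(n)q^n\mapsto\sum_{n\ge1}\Big(\sum_{d\mid n}d^{\lambda-1}c(n^2/d^2)\Big)q^n$; here it is applied with $\lambda=k+2\nu$ to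 $[\theta(\tau),f(4\tau)]_\nu$, which has weight $k+2\nu+\tfrac12$. *)

theory Defs
  imports "HOL-Complex_Analysis.Complex_Analysis"
begin

definition uhp :: "complex set" where
  "uhp = {z. Im z > 0}"

definition qvar :: "complex \<Rightarrow> complex" where
  "qvar \<tau> = exp (2 * of_real pi * \<i> * \<tau>)"

definition modular_transf :: "int \<Rightarrow> (complex \<Rightarrow> complex) \<Rightarrow> bool" where
  "modular_transf k f \<longleftrightarrow>
     (\<forall>a b c d :: int. a * d - b * c = 1 \<longrightarrow>
        (\<forall>z \<in> uhp. f ((of_int a * z + of_int b) / (of_int c * z + of_int d))
                    = (of_int c * z + of_int d) powi k * f z))"

definition has_q_expansion :: "(complex \<Rightarrow> complex) \<Rightarrow> (nat \<Rightarrow> complex) \<Rightarrow> bool" where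
  "has_q_expansion f a \<longleftrightarrow> (\<forall>z \<in> uhp. (\<lambda>n. a n * qvar z ^ n) sums f z)"

text \<open>Cusp form of weight k for SL_2(Z): holomorphic on H, modular, and its
  q-expansion has vanishing constant term (holomorphic and vanishing at the cusp).\<close>
definition is_cusp_form :: "int \<Rightarrow> (complex \<Rightarrow> complex) \<Rightarrow> bool" where
  "is_cusp_form k f \<longleftrightarrow> f holomorphic_on uhp \<and> modular_transf k f \<and>
     (\<exists>a. a 0 = 0 \<and> has_q_expansion f a)"

definition hecke_coeff :: "int \<Rightarrow> nat \<Rightarrow> (nat \<Rightarrow> complex) \<Rightarrow> nat \<Rightarrow> complex" where
  "hecke_coeff k m a n = (\<Sum>d | d dvd gcd m n. of_nat d powi (k - 1) * a (m * n div (d * d)))"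

definition normalized_hecke_eigenform ::
    "int \<Rightarrow> (complex \<Rightarrow> complex) \<Rightarrow> (nat \<Rightarrow> complex) \<Rightarrow> bool" where
  "normalized_hecke_eigenform k f a \<longleftrightarrow>
     is_cusp_form k f \<and> has_q_expansion f a \<and> a 0 = 0 \<and> a 1 = 1 \<and>
     (\<forall>m \<ge> 1. \<exists>ev. \<forall>n. hecke_coeff k m a n = ev * a n)"

definition jtheta :: "complex \<Rightarrow> complex" where
  "jtheta \<tau> = (\<Sum>\<^sub>\<infinity> n :: int. qvar \<tau> ^ nat (n ^ 2))"

definition rankin_cohen ::
    "real \<Rightarrow> real \<Rightarrow> nat \<Rightarrow> (complex \<Rightarrow> complex) \<Rightarrow> (complex \<Rightarrow> complex) \<Rightarrow> complex \<Rightarrow> complex" where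
  "rankin_cohen k1 k2 \<nu> f1 f2 \<tau> =
     inverse ((2 * of_real pi * \<i>) ^ \<nu>) *
     (\<Sum>i = 0..\<nu>. (-1) ^ (\<nu> - i) * of_nat (\<nu> choose i) *
        (Gamma (of_real k1 + of_nat \<nu>) * Gamma (of_real k2 + of_nat \<nu>) /
         (Gamma (of_real k1 + of_nat i) * Gamma (of_real k2 + of_nat (\<nu> - i)))) *
        (deriv ^^ i) f1 \<tau> * (deriv ^^ (\<nu> - i)) f2 \<tau>)"

definition shimura1_coeff :: "int \<Rightarrow> (nat \<Rightarrow> complex) \<Rightarrow> nat \<Rightarrow> complex" where
  "shimura1_coeff lam c n =
     (if n = 0 then 0
      else (\<Sum>d | d dvd n. of_nat d powi (lam - 1) * c ((n div d) ^ 2)))"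

end

theory Submission
  imports Defs "HOL-Computational_Algebra.Polynomial"
begin

(* The q-coefficients of a Rankin-Cohen bracket [g, h]_nu are sum_j b_g(j) b_h(n - j) P(j, n - j)
   for a homogeneous polynomial P of degree nu formed from the coefficients of the bracket.
   For theta(tau) f(4 tau) only j = m^2 with 4 | N^2 - m^2 contributes to the coefficient c(N^2);
   writing m = |2l - N| gives N^2 - m^2 = 4 l (N - l), hence
   c(N^2) = sum_l a(l (N - l)) P_(1/2,k,nu)((2l - N)^2, 4 l (N - l)).
   A binomial identity gives P_(k,k,2nu)(x, y) = (k+2nu-1)!/(k+nu-1)! P_(1/2,k,nu)((x - y)^2, 4xy).
   Finally the Hecke relation a(l) a(r) = sum_(d | (l,r)) d^(k-1) a(lr/d^2) and the homogeneity
   of P regroup the n-th coefficient sum_l a(l) a(n - l) P_(k,k,2nu)(l, n - l) of [f, f]_2nu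
   into the Shimura sum sum_(d | n) d^(k+2nu-1) c((n/d)^2). *)

section \<open>q-expansions\<close>

lemma has_q_expansion_cong:
  assumes "has_q_expansion f b" "\<And>z. z \<in> uhp \<Longrightarrow> f z = g z" "\<And>n. b n = c n"
  shows "has_q_expansion g c"
  using assms unfolding has_q_expansion_def by auto

lemma norm_qvar: "norm (qvar z) = exp (- 2 * pi * Im z)"
  unfolding qvar_def by (simp add: norm_exp_eq_Re)

lemma norm_qvar_less_1: "z \<in> uhp \<Longrightarrow> norm (qvar z) < 1"
  by (simp add: norm_qvar uhp_def)

lemma open_uhp: "open uhp"
  unfolding uhp_def by (rule open_halfspace_Im_gt)

lemma qvar_has_field_derivative: "(qvar has_field_derivative (2 * of_real pi * \<i> * qvar z)) (at z)"
  unfolding qvar_def by (auto intro!: derivative_eq_intros)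

lemma qvar_of_nat_mult: "qvar (of_nat m * z) = qvar z ^ m"
  unfolding qvar_def by (simp flip: exp_of_nat_mult add: algebra_simps)

lemma has_q_expansion_suminf:
  assumes "has_q_expansion f b" "z \<in> uhp"
  shows "f z = (\<Sum>n. b n * qvar z ^ n)"
  using assms by (simp add: has_q_expansion_def sums_unique)

lemma has_q_expansion_summable_beyond:
  assumes "has_q_expansion f b" "z \<in> uhp"
  obtains K where "norm (qvar z) < norm K" "summable (\<lambda>n. b n * K ^ n)"
proof -
  define z' where "z' = complex_of_real (Re z) + \<i> * complex_of_real (Im z / 2)"
  have "Im z > 0" using assms(2) by (simp add: uhp_def)
  then have "z' \<in> uhp" and "norm (qvar z) < norm (qvar z')"
    by (simp_all add: uhp_def z'_def norm_qvar)
  moreover have "(\<lambda>n. b n * qvar z' ^ n) sums f z'"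
    using assms(1) \<open>z' \<in> uhp\<close> by (simp add: has_q_expansion_def)
  ultimately show thesis using that sums_summable by blast
qed

lemma has_q_expansion_deriv:
  assumes "has_q_expansion f b"
  shows "has_q_expansion (deriv f) (\<lambda>n. (2 * of_real pi * \<i> * of_nat n) * b n)"
  unfolding has_q_expansion_def
proof
  fix z assume z: "z \<in> uhp"
  obtain K where K: "norm (qvar z) < norm K" "summable (\<lambda>n. b n * K ^ n)"
    using has_q_expansion_summable_beyond[OF assms z] by blast
  define F where "F = (\<lambda>w. \<Sum>n. b n * w ^ n)"
  define q where "q = qvar z"
  define C :: complex where "C = 2 * of_real pi * \<i>"
  have "(F has_field_derivative (\<Sum>n. diffs b n * q ^ n)) (at q)"
    unfolding F_def q_def by (rule termdiffs_strong[OF K(2) K(1)])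
  from DERIV_chain2[OF this[unfolded q_def] qvar_has_field_derivative[of z]]
  have "((\<lambda>w. F (qvar w)) has_field_derivative (\<Sum>n. diffs b n * q ^ n) * (C * q)) (at z)"
    by (simp add: q_def C_def)
  moreover have "\<And>w. w \<in> uhp \<Longrightarrow> F (qvar w) = f w"
    using has_q_expansion_suminf[OF assms] by (simp add: F_def)
  ultimately have "(f has_field_derivative (\<Sum>n. diffs b n * q ^ n) * (C * q)) (at z)"
    using has_field_derivative_transform_within_open[OF _ open_uhp z] by blast
  then have deriv_eq: "deriv f z = (\<Sum>n. diffs b n * q ^ n) * (C * q)"
    by (rule DERIV_imp_deriv)
  have "summable (\<lambda>n. diffs b n * q ^ n)"
    by (rule termdiff_converges[where K="norm K"])
      (use K(1) powser_inside[OF K(2)] in \<open>auto simp: q_def\<close>)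
  from sums_mult2[OF diffs_equiv[OF this], of "C * q"]
  have "(\<lambda>n. of_nat n * b n * q ^ (n - Suc 0) * (C * q)) sums deriv f z"
    unfolding deriv_eq .
  moreover have "(\<lambda>n. of_nat n * b n * q ^ (n - Suc 0) * (C * q)) = (\<lambda>n. (C * of_nat n) * b n * q ^ n)"
    by (intro ext) (simp add: power_eq_if algebra_simps)
  ultimately show "(\<lambda>n. (2 * of_real pi * \<i> * of_nat n) * b n * qvar z ^ n) sums deriv f z"
    by (simp add: C_def q_def)
qed

lemma has_q_expansion_higher_deriv:
  assumes "has_q_expansion f b"
  shows "has_q_expansion ((deriv ^^ j) f) (\<lambda>n. (2 * of_real pi * \<i> * of_nat n) ^ j * b n)"
proof (induction j)
  case 0
  then show ?case using assms by simp
next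
  case (Suc j)
  show ?case
    by (rule has_q_expansion_cong[OF has_q_expansion_deriv[OF Suc]])
      (simp_all only: funpow.simps comp_apply power_Suc mult.assoc)
qed

lemma has_q_expansion_mult:
  assumes "has_q_expansion f1 b1" "has_q_expansion f2 b2"
  shows "has_q_expansion (\<lambda>z. f1 z * f2 z) (\<lambda>n. \<Sum>j\<le>n. b1 j * b2 (n - j))"
  unfolding has_q_expansion_def
proof
  fix z assume z: "z \<in> uhp"
  define q where "q = qvar z"
  obtain K1 where K1: "norm q < norm K1" "summable (\<lambda>n. b1 n * K1 ^ n)"
    using has_q_expansion_summable_beyond[OF assms(1) z] unfolding q_def by blast
  obtain K2 where K2: "norm q < norm K2" "summable (\<lambda>n. b2 n * K2 ^ n)"
    using has_q_expansion_summable_beyond[OF assms(2) z] unfolding q_def by blast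
  have "(\<lambda>n. \<Sum>j\<le>n. (b1 j * q ^ j) * (b2 (n - j) * q ^ (n - j))) sums
          ((\<Sum>n. b1 n * q ^ n) * (\<Sum>n. b2 n * q ^ n))"
    by (rule Cauchy_product_sums[OF powser_insidea[OF K1(2,1)] powser_insidea[OF K2(2,1)]])
  moreover have "(\<Sum>j\<le>n. (b1 j * q ^ j) * (b2 (n - j) * q ^ (n - j))) =
                 (\<Sum>j\<le>n. b1 j * b2 (n - j)) * q ^ n" for n
    unfolding sum_distrib_right
    by (rule sum.cong) (auto simp: mult_ac simp flip: power_add)
  ultimately show "(\<lambda>n. (\<Sum>j\<le>n. b1 j * b2 (n - j)) * qvar z ^ n) sums (f1 z * f2 z)"
    using has_q_expansion_suminf[OF assms(1) z] has_q_expansion_suminf[OF assms(2) z]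
    by (simp add: q_def)
qed

lemma has_q_expansion_cmult:
  assumes "has_q_expansion f b"
  shows "has_q_expansion (\<lambda>z. c * f z) (\<lambda>n. c * b n)"
  using assms sums_mult[of _ _ c] unfolding has_q_expansion_def by (simp add: mult.assoc)

lemma has_q_expansion_sum:
  assumes "\<And>i. i \<in> A \<Longrightarrow> has_q_expansion (g i) (b i)"
  shows "has_q_expansion (\<lambda>z. \<Sum>i\<in>A. g i z) (\<lambda>n. \<Sum>i\<in>A. b i n)"
  using assms sums_sum[of A "\<lambda>i n. b i n * qvar _ ^ n"]
  unfolding has_q_expansion_def by (simp add: sum_distrib_right)

lemma has_q_expansion_rescale:
  assumes "has_q_expansion f a" "m > 0"
  shows "has_q_expansion (\<lambda>z. f (of_nat m * z)) (\<lambda>n. if m dvd n then a (n div m) else 0)"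
  unfolding has_q_expansion_def
proof
  fix z assume "z \<in> uhp"
  with \<open>m > 0\<close> have "of_nat m * z \<in> uhp" by (simp add: uhp_def)
  define h where "h = (\<lambda>n. (if m dvd n then a (n div m) else 0) * qvar z ^ n)"
  have "(\<lambda>n. a n * qvar (of_nat m * z) ^ n) sums f (of_nat m * z)"
    using assms \<open>of_nat m * z \<in> uhp\<close> by (simp add: has_q_expansion_def)
  then have "(\<lambda>n. h (m * n)) sums f (of_nat m * z)"
    using \<open>m > 0\<close> by (simp add: h_def qvar_of_nat_mult power_mult)
  moreover have "strict_mono (\<lambda>n. m * n)"
    using \<open>m > 0\<close> by (intro strict_monoI) simp
  moreover have "h n = 0" if "n \<notin> range (\<lambda>n. m * n)" for n
    using that by (auto simp: h_def)
  ultimately have "h sums f (of_nat m * z)"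
    by (simp add: sums_mono_reindex)
  then show "(\<lambda>n. (if m dvd n then a (n div m) else 0) * qvar z ^ n) sums f (of_nat m * z)"
    unfolding h_def .
qed

definition theta_coeff :: "nat \<Rightarrow> complex" where
  "theta_coeff n = (if n = 0 then 1 else if \<exists>m. n = m ^ 2 then 2 else 0)"

lemma theta_coeff_square: "theta_coeff (m ^ 2) = (if m = 0 then 1 else 2)"
  unfolding theta_coeff_def by auto

lemma summable_norm_power_squares:
  fixes q :: "'a :: real_normed_div_algebra"
  assumes "norm q < 1"
  shows "summable (\<lambda>m. norm (q ^ (m ^ 2)))"
proof (rule summable_comparison_test[OF _ summable_geometric[of "norm q"]])
  have "norm q ^ (m ^ 2) \<le> norm q ^ m" for m :: nat
    using assms by (intro power_decreasing) (auto simp: power2_eq_square)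
  then show "\<exists>N. \<forall>m\<ge>N. norm (norm (q ^ (m ^ 2))) \<le> norm q ^ m"
    by (simp add: norm_power)
qed (use assms in simp)

lemma int_Un_negative_eq_UNIV: "range int \<union> range (\<lambda>m. - int (Suc m)) = UNIV"
proof -
  have "n \<in> range int \<union> range (\<lambda>m. - int (Suc m))" for n :: int
  proof (cases "n \<ge> 0")
    case True
    then have "n = int (nat n)" by simp
    then show ?thesis by blast
  next
    case False
    then have "n = - int (Suc (nat (- n - 1)))" by simp
    then show ?thesis by blast
  qed
  then show ?thesis by blast
qed

lemma has_sum_theta_series:
  fixes q :: complex
  assumes "norm q < 1"
  shows "((\<lambda>n::int. q ^ nat (n ^ 2)) has_sum (2 * (\<Sum>m. q ^ (m ^ 2)) - 1)) UNIV"
proof -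
  define g where "g = (\<lambda>n::int. q ^ nat (n ^ 2))"
  define S where "S = (\<Sum>m. q ^ (m ^ 2))"
  have norm_summable: "summable (\<lambda>m. norm (q ^ (m ^ 2)))"
    by (rule summable_norm_power_squares[OF assms])
  have "(\<lambda>m. q ^ (m ^ 2)) sums S"
    unfolding S_def using summable_norm_cancel[OF norm_summable] by (rule summable_sums)
  then have "(\<lambda>m. q ^ (Suc m ^ 2)) sums (S - 1)"
    by (subst sums_Suc_iff) simp
  moreover have "summable (\<lambda>m. norm (q ^ (Suc m ^ 2)))"
    using summable_ignore_initial_segment[OF norm_summable, of 1] by simp
  ultimately have "((\<lambda>m. q ^ (Suc m ^ 2)) has_sum (S - 1)) UNIV"
    by (intro norm_summable_imp_has_sum)
  moreover have "g \<circ> (\<lambda>m. - int (Suc m)) = (\<lambda>m. q ^ (Suc m ^ 2))"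
  proof
    fix m
    have "nat ((- int (Suc m)) ^ 2) = Suc m ^ 2"
      unfolding power2_minus by (simp only: of_nat_power[symmetric] nat_int)
    then show "(g \<circ> (\<lambda>m. - int (Suc m))) m = q ^ (Suc m ^ 2)"
      by (simp add: g_def)
  qed
  moreover have "inj (\<lambda>m. - int (Suc m))"
    by (rule injI) simp
  ultimately have negative: "(g has_sum (S - 1)) (range (\<lambda>m. - int (Suc m)))"
    by (simp add: has_sum_reindex)
  have "((\<lambda>m. q ^ (m ^ 2)) has_sum S) UNIV"
    by (rule norm_summable_imp_has_sum[OF norm_summable \<open>(\<lambda>m. q ^ (m ^ 2)) sums S\<close>])
  moreover have "g \<circ> int = (\<lambda>m. q ^ (m ^ 2))"
    by (simp add: g_def comp_def flip: of_nat_power)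
  ultimately have nonnegative: "(g has_sum S) (range int)"
    by (simp add: has_sum_reindex)
  have "range int \<inter> range (\<lambda>m. - int (Suc m)) = {}"
    by auto
  from has_sum_Un_disjoint[OF nonnegative negative this]
  have "(g has_sum (2 * S - 1)) (range int \<union> range (\<lambda>m. - int (Suc m)))"
    by (simp add: algebra_simps)
  moreover note int_Un_negative_eq_UNIV
  ultimately show ?thesis by (simp add: g_def S_def)
qed

lemma has_q_expansion_jtheta: "has_q_expansion jtheta theta_coeff"
  unfolding has_q_expansion_def
proof
  fix z assume "z \<in> uhp"
  define q where "q = qvar z"
  define S where "S = (\<Sum>m. q ^ (m ^ 2))"
  have "norm q < 1" using norm_qvar_less_1[OF \<open>z \<in> uhp\<close>] by (simp add: q_def)
  then have "jtheta z = 2 * S - 1"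
    unfolding jtheta_def q_def S_def by (rule infsumI[OF has_sum_theta_series])
  have "(\<lambda>m. q ^ (m ^ 2)) sums S"
    unfolding S_def
    by (rule summable_sums[OF summable_norm_cancel[OF summable_norm_power_squares]]) fact
  then have "(\<lambda>m. 2 * q ^ (m ^ 2) - (if m = 0 then 1 else 0)) sums (2 * S - 1)"
    using sums_single[of 0 "\<lambda>_. 1 :: complex"] by (intro sums_diff sums_mult) simp_all
  moreover have "theta_coeff (m ^ 2) * q ^ (m ^ 2) = 2 * q ^ (m ^ 2) - (if m = 0 then 1 else 0)"
    for m
    by (simp add: theta_coeff_square)
  ultimately have "(\<lambda>m. theta_coeff (m ^ 2) * q ^ (m ^ 2)) sums (2 * S - 1)"
    by simp
  moreover have "strict_mono (\<lambda>m::nat. m ^ 2)"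
    by (intro strict_monoI power_strict_mono) auto
  moreover have "theta_coeff n * q ^ n = 0" if "n \<notin> range (\<lambda>m. m ^ 2)" for n
  proof -
    have "n \<noteq> 0" "\<not> (\<exists>m. n = m ^ 2)"
      using that by (metis power_zero_numeral rangeI, blast)
    then show ?thesis by (simp add: theta_coeff_def)
  qed
  ultimately have "(\<lambda>n. theta_coeff n * q ^ n) sums (2 * S - 1)"
    using sums_mono_reindex[of "\<lambda>m. m ^ 2" "\<lambda>n. theta_coeff n * q ^ n"] by simp
  then show "(\<lambda>n. theta_coeff n * qvar z ^ n) sums jtheta z"
    using \<open>jtheta z = 2 * S - 1\<close> by (simp add: q_def)
qed

definition rankin_cohen_coeff :: "real \<Rightarrow> real \<Rightarrow> nat \<Rightarrow> nat \<Rightarrow> complex" where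
  "rankin_cohen_coeff k1 k2 \<nu> i = (-1) ^ (\<nu> - i) * of_nat (\<nu> choose i) *
     (Gamma (of_real k1 + of_nat \<nu>) * Gamma (of_real k2 + of_nat \<nu>) /
      (Gamma (of_real k1 + of_nat i) * Gamma (of_real k2 + of_nat (\<nu> - i))))"

definition rankin_cohen_poly :: "real \<Rightarrow> real \<Rightarrow> nat \<Rightarrow> complex \<Rightarrow> complex \<Rightarrow> complex" where
  "rankin_cohen_poly k1 k2 \<nu> x y = (\<Sum>i = 0..\<nu>. rankin_cohen_coeff k1 k2 \<nu> i * x ^ i * y ^ (\<nu> - i))"

lemma rankin_cohen_poly_homogeneous:
  "rankin_cohen_poly k1 k2 \<nu> (c * x) (c * y) = c ^ \<nu> * rankin_cohen_poly k1 k2 \<nu> x y"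
  unfolding rankin_cohen_poly_def sum_distrib_left
proof (rule sum.cong[OF refl])
  fix i assume "i \<in> {0..\<nu>}"
  then have "c ^ i * c ^ (\<nu> - i) = c ^ \<nu>" by (simp flip: power_add)
  then show "rankin_cohen_coeff k1 k2 \<nu> i * (c * x) ^ i * (c * y) ^ (\<nu> - i) =
             c ^ \<nu> * (rankin_cohen_coeff k1 k2 \<nu> i * x ^ i * y ^ (\<nu> - i))"
    by (simp add: power_mult_distrib mult_ac)
qed

lemma has_q_expansion_rankin_cohen:
  assumes "has_q_expansion f1 b1" "has_q_expansion f2 b2"
  shows "has_q_expansion (rankin_cohen k1 k2 \<nu> f1 f2)
           (\<lambda>n. \<Sum>j\<le>n. b1 j * b2 (n - j) * rankin_cohen_poly k1 k2 \<nu> (of_nat j) (of_nat (n - j)))"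
proof -
  let ?C = "2 * of_real pi * \<i> :: complex"
  define G where "G = rankin_cohen_coeff k1 k2 \<nu>"
  have summand: "has_q_expansion
      (\<lambda>z. inverse (?C ^ \<nu>) * G i * ((deriv ^^ i) f1 z * (deriv ^^ (\<nu> - i)) f2 z))
      (\<lambda>n. \<Sum>j\<le>n. b1 j * b2 (n - j) * (G i * of_nat j ^ i * of_nat (n - j) ^ (\<nu> - i)))"
    if "i \<in> {0..\<nu>}" for i
  proof (rule has_q_expansion_cong[OF has_q_expansion_cmult[OF has_q_expansion_mult[OF
          has_q_expansion_higher_deriv[OF assms(1)] has_q_expansion_higher_deriv[OF assms(2)]]]])
    fix n
    have "?C ^ i * ?C ^ (\<nu> - i) = ?C ^ \<nu>" "?C \<noteq> 0"
      using that by (simp_all flip: power_add)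
    then show "inverse (?C ^ \<nu>) * G i * (\<Sum>j\<le>n. (?C * of_nat j) ^ i * b1 j *
                 ((?C * of_nat (n - j)) ^ (\<nu> - i) * b2 (n - j))) =
               (\<Sum>j\<le>n. b1 j * b2 (n - j) * (G i * of_nat j ^ i * of_nat (n - j) ^ (\<nu> - i)))"
      unfolding sum_distrib_left power_mult_distrib
      by (intro sum.cong) (auto simp: field_simps)
  qed simp
  show ?thesis
  proof (rule has_q_expansion_cong[OF has_q_expansion_sum[OF summand]])
    fix z show "(\<Sum>i = 0..\<nu>. inverse (?C ^ \<nu>) * G i * ((deriv ^^ i) f1 z * (deriv ^^ (\<nu> - i)) f2 z))
        = rankin_cohen k1 k2 \<nu> f1 f2 z"
      unfolding rankin_cohen_def G_def rankin_cohen_coeff_def sum_distrib_left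
      by (simp add: mult_ac)
  next
    fix n show "(\<Sum>i = 0..\<nu>. \<Sum>j\<le>n. b1 j * b2 (n - j) * (G i * of_nat j ^ i * of_nat (n - j) ^ (\<nu> - i)))
        = (\<Sum>j\<le>n. b1 j * b2 (n - j) * rankin_cohen_poly k1 k2 \<nu> (of_nat j) (of_nat (n - j)))"
      unfolding rankin_cohen_poly_def G_def sum_distrib_left by (rule sum.swap)
  qed
qed

section \<open>A duplication formula for Rankin--Cohen polynomials\<close>

lemma coeff_linear_power_choose:
  "coeff ([:1, c:] ^ n) i = of_nat (n choose i) * (c :: 'a :: comm_ring_1) ^ i"
proof (induction n arbitrary: i)
  case 0
  then show ?case by (cases i) auto
next
  case (Suc n)
  have split: "[:1, c:] ^ Suc n = [:1, c:] ^ n + pCons 0 (smult c ([:1, c:] ^ n))"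
    by simp
  show ?case
  proof (cases i)
    case 0
    then show ?thesis using Suc by (simp add: split)
  next
    case (Suc j)
    have "coeff ([:1, c:] ^ Suc n) i = of_nat (n choose Suc j) * c ^ Suc j + c * (of_nat (n choose j) * c ^ j)"
      unfolding split Suc coeff_add coeff_pCons_Suc coeff_smult Suc.IH ..
    also have "\<dots> = of_nat (Suc n choose Suc j) * c ^ Suc j"
      by (simp add: binomial_Suc_Suc ring_distribs mult_ac)
    finally show ?thesis using Suc by simp
  qed
qed

text \<open>Both sides are the coefficient of \<open>X ^ (2 * \<nu>)\<close> in
  \<open>((1 - x X) (1 + y X)) ^ n = (1 + (y - x) X - x y X\<^sup>2) ^ n\<close>.\<close>
lemma binomial_convolution_regroup:
  fixes x y :: "'a :: comm_ring_1"
  shows "(\<Sum>i\<le>2*\<nu>. (-1)^i * of_nat (n choose i) * of_nat (n choose (2*\<nu>-i)) * x^i * y^(2*\<nu>-i))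
       = (\<Sum>b\<le>\<nu>. of_nat (n choose b) * of_nat ((n - b) choose (2*\<nu>-2*b)) * (-(x*y))^b * (y-x)^(2*\<nu>-2*b))"
proof -
  define p where "p = ([:1, -x:] * [:1, y:]) ^ n"
  have "coeff p (2*\<nu>) = (\<Sum>i\<le>2*\<nu>. coeff ([:1, -x:] ^ n) i * coeff ([:1, y:] ^ n) (2*\<nu> - i))"
    unfolding p_def power_mult_distrib coeff_mult ..
  also have "\<dots> = (\<Sum>i\<le>2*\<nu>. (-1)^i * of_nat (n choose i) * of_nat (n choose (2*\<nu>-i)) * x^i * y^(2*\<nu>-i))"
    unfolding coeff_linear_power_choose by (rule sum.cong) (auto simp: power_minus[of x] algebra_simps)
  finally have lhs: "coeff p (2*\<nu>) = \<dots>" .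
  have "[:1, -x:] * [:1, y:] = monom (-(x*y)) 2 + [:1, y - x:]"
    by (simp add: monom_Suc monom_0 numeral_2_eq_2 algebra_simps)
  then have "p = (\<Sum>b\<le>n. of_nat (n choose b) * (monom (-(x*y)) 2)^b * [:1, y - x:]^(n-b))"
    unfolding p_def by (simp only: binomial_ring)
  then have "coeff p (2*\<nu>) = (\<Sum>b\<le>n. of_nat (n choose b) * coeff (monom ((-(x*y))^b) (2*b) * [:1, y - x:]^(n-b)) (2*\<nu>))"
    by (simp add: coeff_sum monom_power of_nat_poly mult.commute[of 2] mult.assoc)
  also have "\<dots> = (\<Sum>b\<le>n. if \<nu> < b then 0 else of_nat (n choose b) * of_nat ((n - b) choose (2*\<nu>-2*b)) * (-(x*y))^b * (y-x)^(2*\<nu>-2*b))"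
    unfolding coeff_monom_mult coeff_linear_power_choose by (rule sum.cong) (auto simp: algebra_simps)
  also have "\<dots> = (\<Sum>b\<le>n+\<nu>. if \<nu> < b then 0 else of_nat (n choose b) * of_nat ((n - b) choose (2*\<nu>-2*b)) * (-(x*y))^b * (y-x)^(2*\<nu>-2*b))"
    by (rule sum.mono_neutral_left) (auto simp: binomial_eq_0)
  also have "\<dots> = (\<Sum>b\<le>\<nu>. of_nat (n choose b) * of_nat ((n - b) choose (2*\<nu>-2*b)) * (-(x*y))^b * (y-x)^(2*\<nu>-2*b))"
    by (rule sum.mono_neutral_cong_right) auto
  finally show ?thesis using lhs by simp
qed

lemma Gamma_of_int_plus_of_nat:
  "Gamma (of_real (real_of_int k) + of_nat m :: complex) =
     (if k + int m > 0 then fact (nat (k + int m - 1)) else 0)"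
proof -
  have "(of_real (real_of_int k) + of_nat m :: complex) = of_int (k + int m)" by simp
  then show ?thesis by (simp only: Gamma_of_int)
qed

lemma half_plus_of_nat_not_nonpos_Int: "(of_real (1/2) + of_nat m :: complex) \<notin> \<int>\<^sub>\<le>\<^sub>0"
proof
  assume "(of_real (1/2) + of_nat m :: complex) \<in> \<int>\<^sub>\<le>\<^sub>0"
  then obtain j :: nat where "(of_real (1/2) + of_nat m :: complex) = - of_nat j"
    by (auto elim!: nonpos_Ints_cases')
  then have "Re (of_real (1/2) + of_nat m :: complex) = Re (- of_nat j)" by simp
  then show False by simp
qed

lemma Gamma_half_plus_of_nat:
  "Gamma (of_real (1/2) + of_nat m :: complex) = Gamma (of_real (1/2)) * fact (2*m) / (4^m * fact m)"
proof (induction m)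
  case 0
  then show ?case by simp
next
  case (Suc m)
  have "Gamma (of_real (1/2) + of_nat (Suc m) :: complex) =
        (of_real (1/2) + of_nat m) * Gamma (of_real (1/2) + of_nat m)"
    using Gamma_plus1[OF half_plus_of_nat_not_nonpos_Int[of m]] by (simp add: add.assoc)
  also have "\<dots> = Gamma (of_real (1/2)) * fact (2 * Suc m) / (4 ^ Suc m * fact (Suc m))"
  proof -
    define p :: complex where "p = of_nat m + 1"
    have "p \<noteq> 0" "(fact m :: complex) \<noteq> 0"
      unfolding p_def by (metis of_nat_Suc of_nat_eq_0_iff add.commute nat.distinct(1), simp)
    moreover have "(fact (2 * Suc m) :: complex) = fact (2 * m) * (2 * of_nat m + 1) * (2 * p)"
      by (simp add: algebra_simps p_def)
    moreover have "(fact (Suc m) :: complex) = fact m * p"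
      by (simp add: algebra_simps p_def)
    ultimately show ?thesis
      unfolding Suc.IH by (simp add: field_simps)
  qed
  finally show ?case .
qed

lemma rankin_cohen_coeff_equal_weights:
  assumes i: "i \<le> 2 * \<nu>" and pos: "k + 2 * int \<nu> \<ge> 1"
  defines "n \<equiv> nat (k + 2 * int \<nu> - 1)"
  shows "rankin_cohen_coeff (real_of_int k) (real_of_int k) (2 * \<nu>) i =
           fact (2 * \<nu>) * (-1) ^ i * of_nat (n choose i) * of_nat (n choose (2 * \<nu> - i))"
proof -
  have n: "int n = k + 2 * int \<nu> - 1" using pos by (simp add: n_def)
  have Gamma_top: "Gamma (of_real (real_of_int k) + of_nat (2 * \<nu>) :: complex) = fact n"
    unfolding Gamma_of_int_plus_of_nat using pos by (simp add: n_def)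
  have sign: "(-1 :: complex) ^ (2 * \<nu> - i) = (-1) ^ i"
    using i by (simp add: minus_one_power_iff)
  show ?thesis
  proof (cases "k + int i > 0 \<and> k + int (2 * \<nu> - i) > 0")
    case True
    have le: "i \<le> n" "2 * \<nu> - i \<le> n" using True i n by linarith+
    have "nat (k + int i - 1) = n - (2 * \<nu> - i)" "nat (k + int (2 * \<nu> - i) - 1) = n - i"
      using True i n by linarith+
    then have "Gamma (of_real (real_of_int k) + of_nat i :: complex) = fact (n - (2 * \<nu> - i))"
      "Gamma (of_real (real_of_int k) + of_nat (2 * \<nu> - i) :: complex) = fact (n - i)"
      unfolding Gamma_of_int_plus_of_nat using True by simp_all
    then show ?thesis
      unfolding rankin_cohen_coeff_def Gamma_top sign binomial_fact[OF i] binomial_fact[OF le(1)]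
        binomial_fact[OF le(2)]
      by (simp add: field_simps)
  next
    case False
    then have "Gamma (of_real (real_of_int k) + of_nat i :: complex) *
               Gamma (of_real (real_of_int k) + of_nat (2 * \<nu> - i)) = 0"
      unfolding Gamma_of_int_plus_of_nat by auto
    moreover have "n < i \<or> n < 2 * \<nu> - i"
      using False i n by linarith
    ultimately show ?thesis
      unfolding rankin_cohen_coeff_def by auto
  qed
qed

lemma rankin_cohen_coeff_half:
  assumes b: "b \<le> \<nu>" and pos: "k + 2 * int \<nu> \<ge> 1"
  defines "n \<equiv> nat (k + 2 * int \<nu> - 1)"
  shows "fact n / fact (nat (k + int \<nu> - 1)) * rankin_cohen_coeff (1/2) (real_of_int k) \<nu> (\<nu> - b) * 4 ^ b =
           fact (2 * \<nu>) * (-1) ^ b * of_nat (n choose b) * of_nat ((n - b) choose (2 * \<nu> - 2 * b))"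
proof -
  have n: "int n = k + 2 * int \<nu> - 1" using pos by (simp add: n_def)
  have coeff: "rankin_cohen_coeff (1/2) (real_of_int k) \<nu> (\<nu> - b) = (-1) ^ b * of_nat (\<nu> choose b) *
      (Gamma (of_real (1/2) + of_nat \<nu>) * Gamma (of_real (real_of_int k) + of_nat \<nu>) /
       (Gamma (of_real (1/2) + of_nat (\<nu> - b)) * Gamma (of_real (real_of_int k) + of_nat b)))"
    using b unfolding rankin_cohen_coeff_def by (simp add: binomial_symmetric[OF b, symmetric])
  show ?thesis
  proof (cases "k + int b > 0")
    case True
    define m where "m = nat (k + int \<nu> - 1)"
    define r where "r = nat (k + int b - 1)"
    have le: "b \<le> n" "2 * \<nu> - 2 * b \<le> n - b"
      using True b n by linarith+
    have r: "n - b - (2 * \<nu> - 2 * b) = r"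
      using True b n unfolding r_def by linarith
    have "Gamma (of_real (real_of_int k) + of_nat \<nu> :: complex) = fact m"
      "Gamma (of_real (real_of_int k) + of_nat b :: complex) = fact r"
      unfolding Gamma_of_int_plus_of_nat m_def r_def using True b by simp_all
    moreover have "Gamma (of_real (1/2) + of_nat (\<nu> - b) :: complex) =
        Gamma (of_real (1/2)) * fact (2*\<nu> - 2*b) / (4^(\<nu> - b) * fact (\<nu> - b))"
      using Gamma_half_plus_of_nat[of "\<nu> - b"] by (simp add: diff_mult_distrib2)
    moreover have "(4::complex) ^ \<nu> = 4 ^ b * 4 ^ (\<nu> - b)"
      using b by (simp flip: power_add)
    moreover have "Gamma (of_real (1/2) :: complex) \<noteq> 0"
      using Gamma_nonzero[OF half_plus_of_nat_not_nonpos_Int[of 0]] by simp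
    ultimately show ?thesis
      unfolding coeff Gamma_half_plus_of_nat m_def[symmetric] binomial_fact[OF b]
        binomial_fact[OF le(1)] binomial_fact[OF le(2), unfolded r]
      by (simp add: field_simps)
  next
    case False
    then have "Gamma (of_real (real_of_int k) + of_nat b :: complex) = 0"
      unfolding Gamma_of_int_plus_of_nat by simp
    moreover have "n < b \<or> n - b < 2 * \<nu> - 2 * b"
      using False b n by linarith
    ultimately show ?thesis
      unfolding coeff by auto
  qed
qed

lemma rankin_cohen_poly_equal_weights:
  assumes pos: "k + 2 * int \<nu> \<ge> 1"
  defines "n \<equiv> nat (k + 2 * int \<nu> - 1)"
  shows "rankin_cohen_poly (real_of_int k) (real_of_int k) (2 * \<nu>) x y =
           fact (2 * \<nu>) * (\<Sum>i\<le>2*\<nu>. (-1)^i * of_nat (n choose i) * of_nat (n choose (2*\<nu> - i)) *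
                                         x^i * y^(2*\<nu> - i))"
  unfolding rankin_cohen_poly_def atLeast0AtMost sum_distrib_left
proof (intro sum.cong refl)
  fix i assume "i \<in> {..2*\<nu>}"
  then have "i \<le> 2 * \<nu>" by simp
  show "rankin_cohen_coeff (real_of_int k) (real_of_int k) (2 * \<nu>) i * x ^ i * y ^ (2 * \<nu> - i) =
      fact (2*\<nu>) * ((-1)^i * of_nat (n choose i) * of_nat (n choose (2*\<nu> - i)) * x^i * y^(2*\<nu> - i))"
    unfolding rankin_cohen_coeff_equal_weights[OF \<open>i \<le> 2 * \<nu>\<close> pos, folded n_def]
    by (simp only: mult_ac)
qed

lemma rankin_cohen_poly_half:
  assumes pos: "k + 2 * int \<nu> \<ge> 1"
  defines "n \<equiv> nat (k + 2 * int \<nu> - 1)"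
  shows "fact n / fact (nat (k + int \<nu> - 1)) *
           rankin_cohen_poly (1/2) (real_of_int k) \<nu> ((x - y)^2) (4 * x * y) =
         fact (2 * \<nu>) * (\<Sum>b\<le>\<nu>. of_nat (n choose b) * of_nat ((n - b) choose (2*\<nu> - 2*b)) *
                                       (-(x*y))^b * (y - x)^(2*\<nu> - 2*b))"
proof -
  define t :: complex where "t = fact n / fact (nat (k + int \<nu> - 1))"
  have "t * rankin_cohen_poly (1/2) (real_of_int k) \<nu> ((x - y)^2) (4 * x * y) =
      (\<Sum>b=0..\<nu>. t * rankin_cohen_coeff (1/2) (real_of_int k) \<nu> (\<nu> - b) *
                     ((x - y)^2) ^ (\<nu> - b) * (4 * x * y) ^ (\<nu> - (\<nu> - b)))"
    unfolding rankin_cohen_poly_def sum_distrib_left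
    by (subst sum.atLeastAtMost_rev) (simp add: mult_ac)
  also have "\<dots> = fact (2 * \<nu>) * (\<Sum>b\<le>\<nu>. of_nat (n choose b) * of_nat ((n - b) choose (2*\<nu> - 2*b)) *
                                       (-(x*y))^b * (y - x)^(2*\<nu> - 2*b))"
    unfolding atLeast0AtMost sum_distrib_left
  proof (intro sum.cong refl)
    fix b assume "b \<in> {..\<nu>}"
    then have "b \<le> \<nu>" by simp
    then have "((x - y)^2) ^ (\<nu> - b) = (y - x) ^ (2*\<nu> - 2*b)" "\<nu> - (\<nu> - b) = b"
      by (simp_all add: power2_commute[of x] flip: power_mult diff_mult_distrib2)
    then show "t * rankin_cohen_coeff (1/2) (real_of_int k) \<nu> (\<nu> - b) * ((x - y)^2) ^ (\<nu> - b) *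
                 (4 * x * y) ^ (\<nu> - (\<nu> - b)) =
               fact (2*\<nu>) * (of_nat (n choose b) * of_nat ((n - b) choose (2*\<nu> - 2*b)) *
                 (-(x*y))^b * (y - x)^(2*\<nu> - 2*b))"
      using rankin_cohen_coeff_half[OF \<open>b \<le> \<nu>\<close> pos, folded n_def t_def]
      by (simp add: power_mult_distrib power_minus[of "x * y"] mult_ac)
  qed
  finally show ?thesis
    unfolding t_def .
qed

lemma rankin_cohen_poly_duplication:
  "rankin_cohen_poly (real_of_int k) (real_of_int k) (2 * \<nu>) x y =
     fact (nat (k + 2 * int \<nu> - 1)) / fact (nat (k + int \<nu> - 1)) *
     rankin_cohen_poly (1/2) (real_of_int k) \<nu> ((x - y)^2) (4 * x * y)"
proof (cases "k + 2 * int \<nu> \<ge> 1")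
  case True
  show ?thesis
    unfolding rankin_cohen_poly_equal_weights[OF True] rankin_cohen_poly_half[OF True]
      binomial_convolution_regroup ..
next
  case False
  \<comment> \<open>Gamma is 0 at its poles, so both sides vanish.\<close>
  then have "Gamma (of_real (real_of_int k) + of_nat (2 * \<nu>) :: complex) = 0"
    "Gamma (of_real (real_of_int k) + of_nat \<nu> :: complex) = 0"
    unfolding Gamma_of_int_plus_of_nat by simp_all
  then show ?thesis
    unfolding rankin_cohen_poly_def rankin_cohen_coeff_def by simp
qed

section \<open>Coefficients of the theta bracket at squares\<close>

lemma sum_theta_coeff_squares:
  "(\<Sum>j\<le>N^2. theta_coeff j * h j) = (\<Sum>m\<le>N. theta_coeff (m^2) * h (m^2))"
proof -
  have "(\<Sum>j\<le>N^2. theta_coeff j * h j) = (\<Sum>j\<in>(\<lambda>m. m^2) ` {..N}. theta_coeff j * h j)"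
  proof (rule sum.mono_neutral_right)
    show "(\<lambda>m. m^2) ` {..N} \<subseteq> {..N^2}"
      by (auto simp: power_mono)
    show "\<forall>j\<in>{..N^2} - (\<lambda>m. m^2) ` {..N}. theta_coeff j * h j = 0"
    proof
      fix j assume j: "j \<in> {..N^2} - (\<lambda>m. m^2) ` {..N}"
      have "m \<le> N" if "j = m^2" for m
        using j that power_strict_mono[of N m 2] by (cases "m \<le> N") auto
      with j have "j \<noteq> 0" "\<not> (\<exists>m. j = m^2)"
        by (metis DiffD2 atMost_iff image_eqI power_zero_numeral zero_le, blast)
      then show "theta_coeff j * h j = 0" by (simp add: theta_coeff_def)
    qed
  qed auto
  also have "\<dots> = (\<Sum>m\<le>N. theta_coeff (m^2) * h (m^2))"
    by (rule sum.reindex_cong[where l = "\<lambda>m. m^2"])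
      (auto intro: inj_onI simp: power2_eq_iff_nonneg)
  finally show ?thesis .
qed

lemma card_reflection_fiber:
  assumes "m \<le> N"
  shows "card {l. l \<le> N \<and> nat \<bar>2 * int l - int N\<bar> = m} =
           (if even (N + m) then if m = 0 then 1 else 2 else 0)"
proof -
  have "nat \<bar>2 * int l - int N\<bar> = m \<longleftrightarrow> 2 * l = N + m \<or> 2 * l + m = N" for l
    by linarith
  then have fiber: "{l. l \<le> N \<and> nat \<bar>2 * int l - int N\<bar> = m} =
      {l. l \<le> N \<and> (2 * l = N + m \<or> 2 * l + m = N)}"
    by blast
  show ?thesis
  proof (cases "even (N + m)")
    case True
    then have "{l. l \<le> N \<and> (2 * l = N + m \<or> 2 * l + m = N)} = {(N + m) div 2, (N - m) div 2}"
      using assms by (auto; presburger)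
    moreover have "card {(N + m) div 2, (N - m) div 2} = (if m = 0 then 1 else 2)"
      using True assms by (auto simp: card_insert_if; presburger)
    ultimately show ?thesis using True fiber by simp
  next
    case False
    then have "{l. l \<le> N \<and> (2 * l = N + m \<or> 2 * l + m = N)} = {}"
      by (auto; presburger)
    then show ?thesis using False fiber by simp
  qed
qed

lemma even_add_if_four_dvd_square_diff:
  fixes m N :: nat
  assumes "m \<le> N" "4 dvd (N^2 - m^2)"
  shows "even (N + m)"
proof -
  have "even (N^2 - m^2)"
    using assms(2) by (rule dvd_trans[rotated]) simp
  moreover have "m^2 \<le> N^2"
    using assms(1) by (rule power_mono) simp
  ultimately show ?thesis
    by (auto simp: power2_eq_square)
qed

lemma square_diff_reflection:
  assumes "l \<le> N"
  shows "N^2 - (nat \<bar>2 * int l - int N\<bar>)^2 = 4 * (l * (N - l))"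
proof -
  have "int ((nat \<bar>2 * int l - int N\<bar>)^2) = (2 * int l - int N)^2"
    by (simp add: power2_abs)
  moreover have "(nat \<bar>2 * int l - int N\<bar>)^2 \<le> N^2"
    using assms by (intro power_mono) linarith+
  ultimately have "int (N^2 - (nat \<bar>2 * int l - int N\<bar>)^2) = int N^2 - (2 * int l - int N)^2"
    by (simp add: of_nat_diff)
  also have "\<dots> = int (4 * (l * (N - l)))"
    using assms by (simp add: of_nat_diff power2_eq_square algebra_simps)
  finally show ?thesis
    by (simp only: of_nat_eq_iff)
qed

lemma of_nat_reflection_square:
  assumes "l \<le> N"
  shows "(of_nat ((nat \<bar>2 * int l - int N\<bar>)^2) :: 'a :: comm_ring_1) = (of_nat l - of_nat (N - l))^2"
proof -
  have "int ((nat \<bar>2 * int l - int N\<bar>)^2) = (2 * int l - int N)^2"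
    by (simp add: power2_abs)
  then have "(of_nat ((nat \<bar>2 * int l - int N\<bar>)^2) :: 'a) = of_int ((2 * int l - int N)^2)"
    by (metis of_int_of_nat_eq)
  also have "\<dots> = (of_nat l - of_nat (N - l))^2"
    using assms by (simp add: of_nat_diff algebra_simps)
  finally show ?thesis .
qed

lemma theta_convolution_square:
  fixes a :: "nat \<Rightarrow> complex" and W :: "complex \<Rightarrow> complex \<Rightarrow> complex"
  shows "(\<Sum>j\<le>N^2. theta_coeff j * (if 4 dvd (N^2 - j) then a ((N^2 - j) div 4) else 0) *
            W (of_nat j) (of_nat (N^2 - j))) =
         (\<Sum>l\<le>N. a (l * (N - l)) * W ((of_nat l - of_nat (N - l))^2) (4 * of_nat l * of_nat (N - l)))"
proof -
  define d where "d l = nat \<bar>2 * int l - int N\<bar>" for l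
  define h where "h j = (if 4 dvd (N^2 - j) then a ((N^2 - j) div 4) else 0) *
                          W (of_nat j) (of_nat (N^2 - j))" for j
  have "(\<Sum>j\<le>N^2. theta_coeff j * (if 4 dvd (N^2 - j) then a ((N^2 - j) div 4) else 0) *
            W (of_nat j) (of_nat (N^2 - j))) = (\<Sum>j\<le>N^2. theta_coeff j * h j)"
    by (simp only: h_def mult.assoc)
  also have "\<dots> = (\<Sum>m\<le>N. theta_coeff (m^2) * h (m^2))"
    by (rule sum_theta_coeff_squares)
  also have "\<dots> = (\<Sum>m\<le>N. \<Sum>l\<in>{l \<in> {..N}. d l = m}. h (d l ^ 2))"
  proof (intro sum.cong refl)
    fix m assume "m \<in> {..N}"
    then have "m \<le> N" by simp
    show "theta_coeff (m^2) * h (m^2) = (\<Sum>l\<in>{l \<in> {..N}. d l = m}. h (d l ^ 2))"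
    proof (cases "even (N + m)")
      case True
      then show ?thesis
        using card_reflection_fiber[OF \<open>m \<le> N\<close>] by (simp add: d_def theta_coeff_square)
    next
      case False
      then have "{l \<in> {..N}. d l = m} = {}"
        using card_reflection_fiber[OF \<open>m \<le> N\<close>] by (simp add: d_def)
      moreover have "h (m^2) = 0"
        using even_add_if_four_dvd_square_diff[OF \<open>m \<le> N\<close>] False by (auto simp: h_def)
      ultimately show ?thesis by simp
    qed
  qed
  also have "\<dots> = (\<Sum>l\<le>N. h (d l ^ 2))"
    by (rule sum.group) (auto simp: d_def)
  also have "\<dots> = (\<Sum>l\<le>N. a (l * (N - l)) * W ((of_nat l - of_nat (N - l))^2) (4 * of_nat l * of_nat (N - l)))"
  proof (intro sum.cong refl)
    fix l assume "l \<in> {..N}"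
    then have "l \<le> N" by simp
    show "h (d l ^ 2) = a (l * (N - l)) * W ((of_nat l - of_nat (N - l))^2) (4 * of_nat l * of_nat (N - l))"
      unfolding h_def d_def square_diff_reflection[OF \<open>l \<le> N\<close>] of_nat_reflection_square[OF \<open>l \<le> N\<close>]
      by (simp add: mult.assoc)
  qed
  finally show ?thesis .
qed

section \<open>Hecke relations and the Shimura lift\<close>

lemma normalized_hecke_eigenform_coeff_mult:
  assumes "normalized_hecke_eigenform k f a"
  shows "a l * a r = (\<Sum>d | d dvd gcd l r. of_nat d powi (k - 1) * a (l * r div (d * d)))"
proof (cases "l = 0")
  case True
  then show ?thesis using assms by (simp add: normalized_hecke_eigenform_def)
next
  case False
  with assms obtain ev where ev: "\<And>n. hecke_coeff k l a n = ev * a n"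
    unfolding normalized_hecke_eigenform_def by (metis less_one not_le)
  have "{d. d dvd gcd l 1} = {1::nat}" by auto
  then have "hecke_coeff k l a 1 = a l" by (simp add: hecke_coeff_def)
  with ev[of 1] assms have "ev = a l" by (simp add: normalized_hecke_eigenform_def)
  with ev[of r] show ?thesis by (simp add: hecke_coeff_def)
qed

lemma dvd_gcd_diff_iff:
  fixes d l n :: nat
  assumes "l \<le> n"
  shows "d dvd gcd l (n - l) \<longleftrightarrow> d dvd n \<and> d dvd l"
  using assms by (metis dvd_add dvd_diff_nat gcd_dvd1 gcd_dvd2 gcd_greatest_iff le_add_diff_inverse)

lemma sum_multiples_atMost:
  fixes d M :: nat
  assumes "d > 0"
  shows "(\<Sum>l | l \<le> d * M \<and> d dvd l. g l) = (\<Sum>l\<le>M. g (d * l))"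
proof -
  have "{l. l \<le> d * M \<and> d dvd l} = (\<lambda>l. d * l) ` {..M}"
    using assms by (auto elim!: dvdE)
  moreover have "inj_on (\<lambda>l. d * l) {..M}"
    using assms by (auto intro!: inj_onI)
  ultimately show ?thesis
    by (simp add: sum.reindex)
qed

lemma convolution_over_multiples:
  fixes a :: "nat \<Rightarrow> complex" and L :: "complex \<Rightarrow> complex \<Rightarrow> complex"
  assumes homogeneous: "\<And>t x y. L (t * x) (t * y) = t ^ w * L x y" and "d > 0"
  shows "(\<Sum>l | l \<le> d * M \<and> d dvd l. of_nat d powi (k - 1) * a (l * (d * M - l) div (d * d)) *
            L (of_nat l) (of_nat (d * M - l))) =
         of_nat d powi (k + int w - 1) * (\<Sum>l\<le>M. a (l * (M - l)) * L (of_nat l) (of_nat (M - l)))"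
proof -
  have power_d: "(of_nat d :: complex) powi (k - 1) * of_nat d ^ w = of_nat d powi (k + int w - 1)"
    using \<open>d > 0\<close> power_int_add[of "of_nat d :: complex" "k - 1" "int w"]
    by (simp add: algebra_simps flip: power_int_of_nat)
  show ?thesis
    unfolding sum_multiples_atMost[OF \<open>d > 0\<close>] sum_distrib_left
  proof (intro sum.cong refl)
    fix l assume "l \<in> {..M}"
    have "d * M - d * l = d * (M - l)"
      by (simp add: diff_mult_distrib2)
    moreover have "d * l * (d * (M - l)) div (d * d) = l * (M - l)"
      using \<open>d > 0\<close> by (simp add: mult_ac)
    moreover have "L (of_nat (d * l)) (of_nat (d * (M - l))) = of_nat d ^ w * L (of_nat l) (of_nat (M - l))"
      unfolding of_nat_mult by (rule homogeneous)
    ultimately show "of_nat d powi (k - 1) * a (d * l * (d * M - d * l) div (d * d)) *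
                       L (of_nat (d * l)) (of_nat (d * M - d * l)) =
                     of_nat d powi (k + int w - 1) * (a (l * (M - l)) * L (of_nat l) (of_nat (M - l)))"
      unfolding power_d[symmetric] by (simp only: mult_ac)
  qed
qed

lemma hecke_convolution_eq_shimura1_coeff:
  fixes a c :: "nat \<Rightarrow> complex" and L :: "complex \<Rightarrow> complex \<Rightarrow> complex"
  assumes hecke: "\<And>l r. a l * a r = (\<Sum>d | d dvd gcd l r. of_nat d powi (k - 1) * a (l * r div (d * d)))"
    and "a 0 = 0"
    and homogeneous: "\<And>t x y. L (t * x) (t * y) = t ^ w * L x y"
    and at_squares: "\<And>M. s * c (M^2) = (\<Sum>l\<le>M. a (l * (M - l)) * L (of_nat l) (of_nat (M - l)))"
  shows "(\<Sum>l\<le>n. a l * a (n - l) * L (of_nat l) (of_nat (n - l))) = s * shimura1_coeff (k + int w) c n"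
proof (cases "n = 0")
  case True
  then show ?thesis using \<open>a 0 = 0\<close> by (simp add: shimura1_coeff_def)
next
  case False
  define D where "D = {d. d dvd n}"
  have "finite D" using False by (simp add: D_def finite_divisors_nat)
  define F where "F l d = of_nat d powi (k - 1) * a (l * (n - l) div (d * d)) *
                           L (of_nat l) (of_nat (n - l))" for l d
  have "(\<Sum>l\<le>n. a l * a (n - l) * L (of_nat l) (of_nat (n - l))) =
        (\<Sum>l\<le>n. \<Sum>d | d \<in> D \<and> d dvd l. F l d)"
  proof (intro sum.cong refl)
    fix l assume "l \<in> {..n}"
    then have "{d. d dvd gcd l (n - l)} = {d. d \<in> D \<and> d dvd l}"
      using dvd_gcd_diff_iff[of l n] by (auto simp: D_def)
    then show "a l * a (n - l) * L (of_nat l) (of_nat (n - l)) = (\<Sum>d | d \<in> D \<and> d dvd l. F l d)"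
      unfolding hecke[of l "n - l"] F_def sum_distrib_right by simp
  qed
  also have "\<dots> = (\<Sum>d\<in>D. \<Sum>l | l \<in> {..n} \<and> d dvd l. F l d)"
    by (rule sum.swap_restrict) (simp_all add: \<open>finite D\<close>)
  also have "\<dots> = (\<Sum>d\<in>D. of_nat d powi (k + int w - 1) * (s * c ((n div d)^2)))"
  proof (intro sum.cong refl)
    fix d assume "d \<in> D"
    then have "d > 0" "n = d * (n div d)"
      using False by (auto simp: D_def intro!: Nat.gr0I)
    then show "(\<Sum>l | l \<in> {..n} \<and> d dvd l. F l d) = of_nat d powi (k + int w - 1) * (s * c ((n div d)^2))"
      using convolution_over_multiples[where L = L and a = a and k = k and M = "n div d",
              OF homogeneous \<open>d > 0\<close>]
      unfolding at_squares F_def by simp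
  qed
  also have "\<dots> = s * shimura1_coeff (k + int w) c n"
    using False by (simp add: shimura1_coeff_def D_def sum_distrib_left mult_ac)
  finally show ?thesis .
qed

theorem proposition2p1:
  fixes k :: int and \<nu> :: nat and f :: "complex \<Rightarrow> complex" and a :: "nat \<Rightarrow> complex"
  assumes "even k"
    and "normalized_hecke_eigenform k f a"
  shows "\<exists>c :: nat \<Rightarrow> complex.
           has_q_expansion (rankin_cohen (1/2) (real_of_int k) \<nu> jtheta (\<lambda>\<tau>. f (4 * \<tau>))) c \<and>
           has_q_expansion
             (rankin_cohen (real_of_int k) (real_of_int k) (2 * \<nu>) f f)
             (\<lambda>n. (fact (nat (k + 2 * int \<nu> - 1)) / fact (nat (k + int \<nu> - 1)))
                   * shimura1_coeff (k + 2 * int \<nu>) c n)"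
proof -
  have f: "has_q_expansion f a" and "a 0 = 0"
    using assms(2) by (simp_all add: normalized_hecke_eigenform_def)
  define b where "b n = (if 4 dvd n then a (n div 4) else 0)" for n
  have f4: "has_q_expansion (\<lambda>\<tau>. f (4 * \<tau>)) b"
    using has_q_expansion_rescale[OF f, of 4] by (simp add: b_def[abs_def])
  define c where "c n = (\<Sum>j\<le>n. theta_coeff j * b (n - j) *
                    rankin_cohen_poly (1/2) (real_of_int k) \<nu> (of_nat j) (of_nat (n - j)))" for n
  define s :: complex where "s = fact (nat (k + 2 * int \<nu> - 1)) / fact (nat (k + int \<nu> - 1))"
  have "s * c (M^2) = (\<Sum>l\<le>M. a (l * (M - l)) *
          rankin_cohen_poly (real_of_int k) (real_of_int k) (2 * \<nu>) (of_nat l) (of_nat (M - l)))" for M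
    unfolding c_def b_def theta_convolution_square rankin_cohen_poly_duplication s_def sum_distrib_left
    by (simp only: mult_ac)
  note shimura = hecke_convolution_eq_shimura1_coeff[OF normalized_hecke_eigenform_coeff_mult[OF assms(2)]
         \<open>a 0 = 0\<close> rankin_cohen_poly_homogeneous this]
  have "has_q_expansion (rankin_cohen (real_of_int k) (real_of_int k) (2 * \<nu>) f f)
          (\<lambda>n. s * shimura1_coeff (k + 2 * int \<nu>) c n)"
  proof (rule has_q_expansion_cong[OF has_q_expansion_rankin_cohen[OF f f]])
    fix n
    show "(\<Sum>j\<le>n. a j * a (n - j) *
            rankin_cohen_poly (real_of_int k) (real_of_int k) (2 * \<nu>) (of_nat j) (of_nat (n - j))) =
          s * shimura1_coeff (k + 2 * int \<nu>) c n"
      using shimura[of n] by (simp only: of_nat_mult of_nat_numeral)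
  qed simp
  moreover have "has_q_expansion (rankin_cohen (1/2) (real_of_int k) \<nu> jtheta (\<lambda>\<tau>. f (4 * \<tau>))) c"
    unfolding c_def[abs_def] by (rule has_q_expansion_rankin_cohen[OF has_q_expansion_jtheta f4])
  ultimately show ?thesis
    unfolding s_def by blast
qed

end
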